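(* Let $\mathrm{HTG}(m,n,\ell)$ be a honeycomb toroidal graph in normal form ($0\le \ell\le n/2$). Its girth is $6$, except in the following cases, in which its girth is $4$: (1) $n=4$; (2) $m=1$, $n>4$ and $\ell=3$; (3) $m=1$, $n>4$, $n\equiv 2\pmod 4$ and $\ell=n/2$; (4) $m=1$, $n>4$, $n\equiv 0\pmod 4$ and $\ell=(n-2)/2$; (5) $m=2$, $n>4$ and $\ell\in\{0,2\}$.
   Context: Honeycomb toroidal graph: let $m\ge 1$ be an integer, $n\ge 4$ an even integer, and $\ell$ an integer with $\ell\equiv m \pmod 2$. The graph $\mathrm{HTG}(m,n,\ell)$ has vertex set $\{u_{i,j}: 0\le i\le m-1,\ j\in\mathbb{Z}_n\}$ (second subscripts are taken modulo $n$; the vertices $u_{i,0},\dots,u_{i,n-1}$ form column $i$) and the following edges: vertical edges $u_{i,j}u_{i,j+1}$ for all $0\le i\le m-1$ and all $j$; flat edges $u_{i,j}u_{i+1,j}$ for $0\le i\le m-2$ and all $j$ with $i+j$ odd; jump edges $u_{m-1,j}u_{0,j+\ell}$ for all $j$ with $j\equiv m\pmod 2$. Only parameters for which this is a simple 3-regular graph are allowed (in particular, when $m=1$ one requires $\ell\not\equiv\pm1\pmod n$). The graph is in normal form if $0\le\ell\le n/2$. The girth is the length of a shortest cycle. *)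

theory Defs
  imports Main
begin

text \<open>Vertex u_{i,j} is the pair (i,j) with i < m and j in {0..<n} (representatives of Z_n).\<close>

definition htg_verts :: "nat \<Rightarrow> nat \<Rightarrow> (nat \<times> nat) set" where
  "htg_verts m n = {(i, j). i < m \<and> j < n}"

definition htg_edge :: "nat \<Rightarrow> nat \<Rightarrow> int \<Rightarrow> nat \<times> nat \<Rightarrow> nat \<times> nat \<Rightarrow> bool" where
  "htg_edge m n l v w =
     (case v of (i, j) \<Rightarrow> case w of (i', j') \<Rightarrow>
        (i' = i \<and> j' = (j + 1) mod n)
      \<or> (i + 1 \<le> m - 1 \<and> i' = i + 1 \<and> j' = j \<and> odd (i + j))
      \<or> (i = m - 1 \<and> i' = 0 \<and> j mod 2 = m mod 2 \<and> int j' = (int j + l) mod int n))"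

definition htg_adj :: "nat \<Rightarrow> nat \<Rightarrow> int \<Rightarrow> nat \<times> nat \<Rightarrow> nat \<times> nat \<Rightarrow> bool" where
  "htg_adj m n l v w =
     (v \<in> htg_verts m n \<and> w \<in> htg_verts m n \<and> (htg_edge m n l v w \<or> htg_edge m n l w v))"

definition htg_simple_cubic :: "nat \<Rightarrow> nat \<Rightarrow> int \<Rightarrow> bool" where
  "htg_simple_cubic m n l =
     (\<forall>v \<in> htg_verts m n. \<not> htg_adj m n l v v \<and> card {w. htg_adj m n l v w} = 3)"

definition is_cycle :: "'a set \<Rightarrow> ('a \<Rightarrow> 'a \<Rightarrow> bool) \<Rightarrow> 'a list \<Rightarrow> bool" where
  "is_cycle V E c =
     (3 \<le> length c \<and> distinct c \<and> set c \<subseteq> V \<and>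
      (\<forall>k < length c. E (c ! k) (c ! ((k + 1) mod length c))))"

definition girth :: "'a set \<Rightarrow> ('a \<Rightarrow> 'a \<Rightarrow> bool) \<Rightarrow> nat" where
  "girth V E = (LEAST k. \<exists>c. is_cycle V E c \<and> length c = k)"

end

theory Submission
  imports Defs "HOL-Number_Theory.Cong"
begin

text \<open>Colouring u_{i,j} by the parity of i + j shows that HTG(m,n,l) is bipartite, so every
  cycle has even length, and the hexagons of the honeycomb always give 6-cycles. Every vertex
  has exactly one neighbour outside its column, so in a 4-cycle the non-vertical edges are not
  consecutive: there are none, one, or two opposite ones. Following the cycle, the row index
  returns to its start modulo n, and the resulting congruences for n and l, together with the
  normal form 0 \<le> l \<le> n/2, force one of the listed exceptional cases, each of which does
  contain a 4-cycle.\<close>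

lemma cong_shift_trans:
  fixes a b c k k' n :: int
  assumes "[a + k = b] (mod n)" and "[b + k' = c] (mod n)"
  shows "[a + (k + k') = c] (mod n)"
  using cong_trans[OF cong_add[OF assms(1) cong_refl[of k']] assms(2)] by (simp add: add.assoc)

lemma cong_shift_sym:
  fixes a b k n :: int
  assumes "[a + k = b] (mod n)"
  shows "[b + - k = a] (mod n)"
proof -
  have "b + - k - a = - (a + k - b)" by simp
  then show ?thesis using assms unfolding cong_iff_dvd_diff by (simp only: dvd_minus_iff)
qed

lemma cong_shift_self_iff:
  fixes a k n :: int
  shows "[a + k = a] (mod n) \<longleftrightarrow> n dvd k"
  by (simp add: cong_iff_dvd_diff)

lemma cong_shift_unique:
  assumes "[int j + k = int j'] (mod int n)" and "[int j + k = int j''] (mod int n)"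
    and "j' < n" and "j'' < n"
  shows "j' = j''"
  using cong_less_imp_eq_int[OF _ _ _ _ cong_trans[OF cong_sym[OF assms(1)] assms(2)]] assms(3,4)
  by simp

lemma cong_shift_unique_source:
  assumes "[int j' + k = int j] (mod int n)" and "[int j'' + k = int j] (mod int n)"
    and "j' < n" and "j'' < n"
  shows "j' = j''"
proof -
  have "[int j' = int j''] (mod int n)"
    using cong_trans[OF assms(1) cong_sym[OF assms(2)]] by (simp add: cong_add_rcancel)
  then show ?thesis using cong_less_imp_eq_int[of "int j'" "int n" "int j''"] assms(3,4) by simp
qed

lemma even_cong_shift:
  fixes a b k n :: int
  assumes "even n" and "[a + k = b] (mod n)"
  shows "even b \<longleftrightarrow> even (a + k)"
  using cong_dvd_iff[OF cong_dvd_modulus[OF assms(2), of 2]] assms(1) by simp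

lemma dvd_cases_between_neg_double:
  fixes d x :: int
  assumes "d dvd x" and "- d < x" and "x < 2 * d"
  shows "x = 0 \<or> x = d"
proof -
  obtain k where x: "x = d * k" using assms(1) by blast
  have d: "0 < d" using assms(2,3) by linarith
  have "d * -1 < d * k" "d * k < d * 2" using assms(2,3) x by (simp_all add: mult.commute)
  then have "-1 < k" "k < 2" using d mult_less_cancel_left_pos by blast+
  then have "k = 0 \<or> k = 1" by linarith
  then show ?thesis using x by auto
qed

lemma of_nat_eq_mod_iff_cong:
  fixes x :: int
  assumes "j < n"
  shows "int j = x mod int n \<longleftrightarrow> [x = int j] (mod int n)"
  using assms by (auto simp: cong_def)

lemma girth_eqI:
  assumes "is_cycle V E c" and "length c = g" and "\<And>c. is_cycle V E c \<Longrightarrow> g \<le> length c"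
  shows "girth V E = g"
  unfolding girth_def by (rule Least_equality) (use assms in auto)

lemma is_cycle_even_length:
  fixes f :: "'a \<Rightarrow> bool"
  assumes "is_cycle V E c" and "\<And>v w. E v w \<Longrightarrow> f v \<noteq> f w"
  shows "even (length c)"
proof -
  let ?L = "length c"
  have L: "3 \<le> ?L" and adj: "\<And>k. k < ?L \<Longrightarrow> E (c ! k) (c ! ((k + 1) mod ?L))"
    using assms(1) unfolding is_cycle_def by auto
  have alternate: "f (c ! k) \<longleftrightarrow> (f (c ! 0) \<longleftrightarrow> even k)" if "k < ?L" for k
    using that
  proof (induction k)
    case 0
    then show ?case by simp
  next
    case (Suc k)
    have "E (c ! k) (c ! Suc k)" using adj[of k] Suc.prems by simp
    then show ?case using Suc assms(2) by fastforce
  qed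
  have wrap: "?L - 1 + 1 = ?L" using L by simp
  have "E (c ! (?L - 1)) (c ! ((?L - 1 + 1) mod ?L))" using L by (intro adj) simp
  then have "E (c ! (?L - 1)) (c ! 0)" unfolding wrap by simp
  then have "f (c ! (?L - 1)) \<noteq> f (c ! 0)" by (rule assms(2))
  moreover have "f (c ! (?L - 1)) \<longleftrightarrow> (f (c ! 0) \<longleftrightarrow> even (?L - 1))"
    using L by (intro alternate) simp
  ultimately have "odd (?L - 1)" by argo
  then show ?thesis using L by simp
qed

lemma is_cycle_length_4E:
  assumes "is_cycle V E c" and "length c = 4"
  obtains a b c' d where "E a b" "E b c'" "E c' d" "E d a" "a \<noteq> c'" "b \<noteq> d"
proof -
  obtain a b c' d where c: "c = [a, b, c', d]"
    using assms(2) by (auto simp: length_Suc_conv numeral_eq_Suc)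
  have step: "E (c ! k) (c ! ((k + 1) mod 4))" if "k < 4" for k
    using assms that unfolding is_cycle_def by auto
  have "distinct c" using assms(1) unfolding is_cycle_def by simp
  show thesis
  proof (rule that)
    show "E a b" using step[of 0] c by simp
    show "E b c'" using step[of 1] c by simp
    show "E c' d" using step[of 2] c by simp
    show "E d a" using step[of 3] c by simp
    show "a \<noteq> c'" "b \<noteq> d" using \<open>distinct c\<close> c by auto
  qed
qed

lemma is_cycle_4I:
  assumes "E a b" "E b c" "E c d" "E d a" and "distinct [a, b, c, d]"
    and "\<And>v w. E v w \<Longrightarrow> v \<in> V"
  shows "is_cycle V E [a, b, c, d]"
proof -
  have "E ([a, b, c, d] ! k) ([a, b, c, d] ! ((k + 1) mod length [a, b, c, d]))"
    if "k < length [a, b, c, d]" for k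
  proof -
    have "k = 0 \<or> k = 1 \<or> k = 2 \<or> k = 3" using that by (simp; presburger)
    then show ?thesis using assms(1-4) by (elim disjE) simp_all
  qed
  moreover have "set [a, b, c, d] \<subseteq> V" using assms(1-4,6) by auto
  ultimately show ?thesis unfolding is_cycle_def using assms(5) by simp
qed

lemma is_cycle_6I:
  assumes "E a b" "E b c" "E c d" "E d e" "E e f" "E f a" and "distinct [a, b, c, d, e, f]"
    and "\<And>v w. E v w \<Longrightarrow> v \<in> V"
  shows "is_cycle V E [a, b, c, d, e, f]"
proof -
  have "E ([a, b, c, d, e, f] ! k) ([a, b, c, d, e, f] ! ((k + 1) mod length [a, b, c, d, e, f]))"
    if "k < length [a, b, c, d, e, f]" for k
  proof -
    have "k = 0 \<or> k = 1 \<or> k = 2 \<or> k = 3 \<or> k = 4 \<or> k = 5" using that by (simp; presburger)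
    then show ?thesis using assms(1-6) by (elim disjE) simp_all
  qed
  moreover have "set [a, b, c, d, e, f] \<subseteq> V" using assms(1-6,8) by auto
  ultimately show ?thesis unfolding is_cycle_def using assms(7) by simp
qed

section \<open>Vertical and horizontal edges\<close>

definition vertical_adj :: "nat \<Rightarrow> nat \<times> nat \<Rightarrow> nat \<times> nat \<Rightarrow> bool" where
  "vertical_adj n v w \<longleftrightarrow>
     fst w = fst v \<and> (\<exists>d. \<bar>d\<bar> = 1 \<and> [int (snd v) + d = int (snd w)] (mod int n))"

definition flat_edge :: "nat \<Rightarrow> nat \<times> nat \<Rightarrow> nat \<times> nat \<Rightarrow> bool" where
  "flat_edge m v w \<longleftrightarrow> fst v + 1 < m \<and> w = (fst v + 1, snd v) \<and> odd (fst v + snd v)"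

definition jump_edge :: "nat \<Rightarrow> nat \<Rightarrow> int \<Rightarrow> nat \<times> nat \<Rightarrow> nat \<times> nat \<Rightarrow> bool" where
  "jump_edge m n l v w \<longleftrightarrow>
     fst v = m - 1 \<and> fst w = 0 \<and> snd v mod 2 = m mod 2 \<and>
     [int (snd v) + l = int (snd w)] (mod int n)"

definition horizontal_edge :: "nat \<Rightarrow> nat \<Rightarrow> int \<Rightarrow> nat \<times> nat \<Rightarrow> nat \<times> nat \<Rightarrow> bool" where
  "horizontal_edge m n l v w \<longleftrightarrow> flat_edge m v w \<or> jump_edge m n l v w"

definition horizontal_adj :: "nat \<Rightarrow> nat \<Rightarrow> int \<Rightarrow> nat \<times> nat \<Rightarrow> nat \<times> nat \<Rightarrow> bool" where
  "horizontal_adj m n l v w \<longleftrightarrow> horizontal_edge m n l v w \<or> horizontal_edge m n l w v"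

lemma vertical_adjE:
  assumes "vertical_adj n v w"
  obtains d where "\<bar>d\<bar> = 1" "fst w = fst v" "[int (snd v) + d = int (snd w)] (mod int n)"
  using assms unfolding vertical_adj_def by blast

lemma vertical_adj_iff:
  "vertical_adj n v w \<longleftrightarrow> fst w = fst v \<and>
     ([int (snd v) + 1 = int (snd w)] (mod int n) \<or> [int (snd w) + 1 = int (snd v)] (mod int n))"
proof -
  have unit: "(\<exists>d::int. \<bar>d\<bar> = 1 \<and> P d) \<longleftrightarrow> P 1 \<or> P (- 1)" for P
  proof
    assume "\<exists>d::int. \<bar>d\<bar> = 1 \<and> P d"
    then obtain d :: int where "\<bar>d\<bar> = 1" "P d" by blast
    moreover have "d = 1 \<or> d = - 1" using \<open>\<bar>d\<bar> = 1\<close> by arith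
    ultimately show "P 1 \<or> P (- 1)" by auto
  next
    assume "P 1 \<or> P (- 1)"
    then show "\<exists>d::int. \<bar>d\<bar> = 1 \<and> P d" by (metis abs_minus abs_one)
  qed
  have "[int (snd v) + - 1 = int (snd w)] (mod int n) \<longleftrightarrow>
      [int (snd w) + 1 = int (snd v)] (mod int n)"
  proof
    assume "[int (snd v) + - 1 = int (snd w)] (mod int n)"
    from cong_shift_sym[OF this] show "[int (snd w) + 1 = int (snd v)] (mod int n)" by simp
  qed (rule cong_shift_sym)
  then show ?thesis unfolding vertical_adj_def unit by simp
qed

lemma vertical_adj_sym: "vertical_adj n v w \<Longrightarrow> vertical_adj n w v"
  unfolding vertical_adj_iff by auto

lemma htg_edge_iff:
  assumes "snd w < n"
  shows "htg_edge m n l v w \<longleftrightarrow>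
    (fst w = fst v \<and> [int (snd v) + 1 = int (snd w)] (mod int n)) \<or> horizontal_edge m n l v w"
proof -
  obtain i j i' j' where v: "v = (i, j)" and w: "w = (i', j')" by fastforce
  have "(int j + 1) mod int n = int ((j + 1) mod n)" by (simp add: of_nat_mod add.commute)
  then have "j' = (j + 1) mod n \<longleftrightarrow> int j' = (int j + 1) mod int n" by simp
  also have "\<dots> \<longleftrightarrow> [int j + 1 = int j'] (mod int n)"
    using assms w by (simp add: of_nat_eq_mod_iff_cong)
  finally have vertical: "j' = (j + 1) mod n \<longleftrightarrow> [int j + 1 = int j'] (mod int n)" .
  have jump: "int j' = (int j + l) mod int n \<longleftrightarrow> [int j + l = int j'] (mod int n)"
    using assms w by (simp add: of_nat_eq_mod_iff_cong)
  show ?thesis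
    unfolding htg_edge_def horizontal_edge_def flat_edge_def jump_edge_def v w prod.case
      vertical jump by auto
qed

lemma htg_adj_iff:
  "htg_adj m n l v w \<longleftrightarrow> v \<in> htg_verts m n \<and> w \<in> htg_verts m n \<and>
     (vertical_adj n v w \<or> horizontal_adj m n l v w)"
proof (cases "snd v < n \<and> snd w < n")
  case True
  then show ?thesis
    unfolding htg_adj_def htg_edge_iff[OF conjunct1[OF True]] htg_edge_iff[OF conjunct2[OF True]]
      vertical_adj_iff horizontal_adj_def by auto
next
  case False
  then show ?thesis unfolding htg_adj_def htg_verts_def by auto
qed

lemma htg_adj_sym: "htg_adj m n l v w \<Longrightarrow> htg_adj m n l w v"
  unfolding htg_adj_def by auto

lemma htg_adj_in_verts: "htg_adj m n l v w \<Longrightarrow> v \<in> htg_verts m n"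
  unfolding htg_adj_def by simp

lemma horizontal_adj_sym: "horizontal_adj m n l v w \<Longrightarrow> horizontal_adj m n l w v"
  unfolding horizontal_adj_def by blast

lemma htg_adj_cases:
  assumes "htg_adj m n l v w"
  shows "vertical_adj n v w \<or> horizontal_adj m n l v w" and "snd v < n" and "snd w < n"
  using assms unfolding htg_adj_iff htg_verts_def by auto

lemma horizontal_edge_unique:
  assumes "horizontal_edge m n l v w" and "horizontal_edge m n l v w'"
    and "snd w < n" and "snd w' < n"
  shows "w = w'"
  using assms cong_shift_unique[where j = "snd v" and j' = "snd w" and j'' = "snd w'"]
  unfolding horizontal_edge_def flat_edge_def jump_edge_def by (auto simp: prod_eq_iff)

lemma horizontal_edge_unique_source:
  assumes "horizontal_edge m n l v w" and "horizontal_edge m n l v' w"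
    and "snd v < n" and "snd v' < n"
  shows "v = v'"
  using assms cong_shift_unique_source[where j' = "snd v" and j = "snd w" and j'' = "snd v'"]
  unfolding horizontal_edge_def flat_edge_def jump_edge_def by (auto simp: prod_eq_iff)

lemma vertical_adj_parity:
  assumes "even n" and "vertical_adj n v w"
  shows "even (fst v + snd v) \<noteq> even (fst w + snd w)"
proof -
  obtain d where d: "\<bar>d\<bar> = 1" and column: "fst w = fst v"
    and shift: "[int (snd v) + d = int (snd w)] (mod int n)"
    using assms(2) by (rule vertical_adjE)
  have "even (int (snd w)) \<longleftrightarrow> even (int (snd v) + d)"
    using even_cong_shift[OF _ shift] assms(1) by simp
  moreover have "d = 1 \<or> d = - 1" using d by arith
  then have "odd d" by auto
  ultimately show ?thesis using column by simp
qed

locale htg =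
  fixes m n :: nat and l :: int
  assumes m_pos: "1 \<le> m" and n_even: "even n" and l_parity: "l mod 2 = int m mod 2"
begin

lemma horizontal_edge_parity:
  assumes "horizontal_edge m n l v w"
  shows "odd (fst v + snd v) \<and> even (fst w + snd w)"
  using assms unfolding horizontal_edge_def
proof
  assume "flat_edge m v w"
  then show ?thesis unfolding flat_edge_def by auto
next
  assume "jump_edge m n l v w"
  then have v: "fst v = m - 1" "snd v mod 2 = m mod 2" and w: "fst w = 0"
    and shift: "[int (snd v) + l = int (snd w)] (mod int n)"
    unfolding jump_edge_def by auto
  have "odd (fst v + snd v)" using v m_pos by presburger
  moreover have "even (int (snd v) + l)" using v(2) l_parity by presburger
  then have "even (snd w)" using even_cong_shift[OF _ shift] n_even by simp
  ultimately show ?thesis using w by simp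
qed

lemma htg_adj_parity:
  assumes "htg_adj m n l v w"
  shows "even (fst v + snd v) \<noteq> even (fst w + snd w)"
  using assms vertical_adj_parity[OF n_even] horizontal_edge_parity
  unfolding htg_adj_iff horizontal_adj_def by blast

lemma horizontal_adj_unique:
  assumes "horizontal_adj m n l v w" and "horizontal_adj m n l v w'"
    and "snd w < n" and "snd w' < n"
  shows "w = w'"
proof (cases "odd (fst v + snd v)")
  case True
  then have "horizontal_edge m n l v w" "horizontal_edge m n l v w'"
    using assms(1,2) horizontal_edge_parity unfolding horizontal_adj_def by blast+
  then show ?thesis using horizontal_edge_unique assms(3,4) by blast
next
  case False
  then have "horizontal_edge m n l w v" "horizontal_edge m n l w' v"
    using assms(1,2) horizontal_edge_parity unfolding horizontal_adj_def by blast+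
  then show ?thesis using horizontal_edge_unique_source assms(3,4) by blast
qed

lemma horizontal_adj_same_column:
  assumes "horizontal_adj m n l v w" and "fst v = fst w"
  shows "m = 1 \<and> ([int (snd v) + l = int (snd w)] (mod int n) \<or>
                  [int (snd w) + l = int (snd v)] (mod int n))"
  using assms m_pos
  unfolding horizontal_adj_def horizontal_edge_def flat_edge_def jump_edge_def
  by (auto simp: prod_eq_iff)

end

section \<open>Short cycles\<close>

lemma htg_adj_vertical:
  assumes "i < m" and "j' = j + 1" and "j' < n"
  shows "htg_adj m n l (i, j) (i, j')"
  using assms unfolding htg_adj_def htg_verts_def htg_edge_def by simp

lemma htg_adj_vertical_wrap:
  assumes "i < m" and "0 < n"
  shows "htg_adj m n l (i, n - 1) (i, 0)"
  using assms unfolding htg_adj_def htg_verts_def htg_edge_def by simp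

lemma htg_adj_flat:
  assumes "i + 1 < m" and "i' = i + 1" and "j < n" and "odd (i + j)"
  shows "htg_adj m n l (i, j) (i', j)"
  using assms unfolding htg_adj_def htg_verts_def htg_edge_def by auto

lemma htg_adj_jump:
  assumes "1 \<le> m" and "i = m - 1" and "j < n" and "j' < n" and "j mod 2 = m mod 2"
    and "[int j + l = int j'] (mod int n)"
  shows "htg_adj m n l (i, j) (0, j')"
  using assms of_nat_eq_mod_iff_cong[OF assms(4)]
  unfolding htg_adj_def htg_verts_def htg_edge_def by auto

lemma htg_four_cycle_n4:
  assumes "1 \<le> m"
  shows "\<exists>c. is_cycle (htg_verts m 4) (htg_adj m 4 l) c \<and> length c = 4"
proof -
  have "is_cycle (htg_verts m 4) (htg_adj m 4 l) [(0, 0), (0, 1), (0, 2), (0, 3)]"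
  proof (rule is_cycle_4I[OF _ _ _ _ _ htg_adj_in_verts])
    show "htg_adj m 4 l (0, 0) (0, 1)" "htg_adj m 4 l (0, 1) (0, 2)" "htg_adj m 4 l (0, 2) (0, 3)"
      by (rule htg_adj_vertical; use assms in simp)+
    show "htg_adj m 4 l (0, 3) (0, 0)" using htg_adj_vertical_wrap[of 0 m 4] assms by simp
  qed simp
  then show ?thesis by fastforce
qed

lemma htg_four_cycle_m1_l3:
  assumes "6 \<le> n"
  shows "\<exists>c. is_cycle (htg_verts 1 n) (htg_adj 1 n 3) c \<and> length c = 4"
proof -
  have "is_cycle (htg_verts 1 n) (htg_adj 1 n 3) [(0, 1), (0, 4), (0, 3), (0, 2)]"
  proof (rule is_cycle_4I[OF _ _ _ _ _ htg_adj_in_verts])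
    show "htg_adj 1 n 3 (0, 1) (0, 4)" by (rule htg_adj_jump) (use assms in auto)
    show "htg_adj 1 n 3 (0, 4) (0, 3)" "htg_adj 1 n 3 (0, 3) (0, 2)" "htg_adj 1 n 3 (0, 2) (0, 1)"
      by (rule htg_adj_sym, rule htg_adj_vertical; use assms in simp)+
  qed simp
  then show ?thesis by fastforce
qed

text \<open>For m = 1 and l = L odd, two jumps from rows 1 and L + 2 close up with two vertical
  edges as soon as 2L + 2 \<equiv> 2 or 0 (mod n).\<close>

lemma htg_four_cycle_m1_double_jump:
  assumes "odd L" and "3 \<le> L" and "n = 2 * L \<or> n = 2 * L + 2"
  shows "\<exists>c. is_cycle (htg_verts 1 n) (htg_adj 1 n (int L)) c \<and> length c = 4"
proof -
  define r where "r = (if n = 2 * L then 2 else 0 :: nat)"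
  have r: "r < n" "[int (L + 2) + int L = int r] (mod int n)"
    "r \<noteq> 1" "r \<noteq> L + 1" "r \<noteq> L + 2"
    using assms unfolding r_def cong_iff_dvd_diff by (auto simp: algebra_simps)
  have "is_cycle (htg_verts 1 n) (htg_adj 1 n (int L)) [(0, 1), (0, L + 1), (0, L + 2), (0, r)]"
  proof (rule is_cycle_4I[OF _ _ _ _ _ htg_adj_in_verts])
    show "htg_adj 1 n (int L) (0, 1) (0, L + 1)" by (rule htg_adj_jump) (use assms in auto)
    show "htg_adj 1 n (int L) (0, L + 1) (0, L + 2)" by (rule htg_adj_vertical) (use assms in auto)
    show "htg_adj 1 n (int L) (0, L + 2) (0, r)"
      by (rule htg_adj_jump) (use assms r in \<open>auto simp: odd_iff_mod_2_eq_one\<close>)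
    show "htg_adj 1 n (int L) (0, r) (0, 1)"
      using htg_adj_vertical[of 0 1 1 0 n] htg_adj_sym[OF htg_adj_vertical[of 0 1 2 1 n]] assms
      unfolding r_def by auto
  qed (use r assms in auto)
  then show ?thesis by fastforce
qed

lemma htg_four_cycle_m2:
  assumes "4 \<le> n" and "l = 0 \<or> l = 2"
  shows "\<exists>c. is_cycle (htg_verts 2 n) (htg_adj 2 n l) c \<and> length c = 4"
  using assms(2)
proof
  assume l: "l = 0"
  have "is_cycle (htg_verts 2 n) (htg_adj 2 n l) [(0, 0), (1, 0), (1, 1), (0, 1)]"
  proof (rule is_cycle_4I[OF _ _ _ _ _ htg_adj_in_verts])
    show "htg_adj 2 n l (0, 0) (1, 0)" by (rule htg_adj_sym, rule htg_adj_jump) (use assms l in auto)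
    show "htg_adj 2 n l (1, 0) (1, 1)" by (rule htg_adj_vertical) (use assms in auto)
    show "htg_adj 2 n l (1, 1) (0, 1)" by (rule htg_adj_sym, rule htg_adj_flat) (use assms in auto)
    show "htg_adj 2 n l (0, 1) (0, 0)" by (rule htg_adj_sym, rule htg_adj_vertical) (use assms in auto)
  qed simp
  then show ?thesis by fastforce
next
  assume l: "l = 2"
  have "is_cycle (htg_verts 2 n) (htg_adj 2 n l) [(0, 1), (1, 1), (1, 0), (0, 2)]"
  proof (rule is_cycle_4I[OF _ _ _ _ _ htg_adj_in_verts])
    show "htg_adj 2 n l (0, 1) (1, 1)" by (rule htg_adj_flat) (use assms in auto)
    show "htg_adj 2 n l (1, 1) (1, 0)" by (rule htg_adj_sym, rule htg_adj_vertical) (use assms in auto)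
    show "htg_adj 2 n l (1, 0) (0, 2)" by (rule htg_adj_jump) (use assms l in auto)
    show "htg_adj 2 n l (0, 2) (0, 1)" by (rule htg_adj_sym, rule htg_adj_vertical) (use assms in auto)
  qed simp
  then show ?thesis by fastforce
qed

lemma htg_six_cycle_m2:
  assumes "2 \<le> m" and "4 \<le> n"
  shows "\<exists>c. is_cycle (htg_verts m n) (htg_adj m n l) c \<and> length c = 6"
proof -
  have "is_cycle (htg_verts m n) (htg_adj m n l) [(0, 1), (1, 1), (1, 2), (1, 3), (0, 3), (0, 2)]"
  proof (rule is_cycle_6I[OF _ _ _ _ _ _ _ htg_adj_in_verts])
    show "htg_adj m n l (0, 1) (1, 1)" by (rule htg_adj_flat) (use assms in auto)
    show "htg_adj m n l (1, 1) (1, 2)" "htg_adj m n l (1, 2) (1, 3)"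
      by (rule htg_adj_vertical; use assms in simp)+
    show "htg_adj m n l (1, 3) (0, 3)" by (rule htg_adj_sym, rule htg_adj_flat) (use assms in auto)
    show "htg_adj m n l (0, 3) (0, 2)" "htg_adj m n l (0, 2) (0, 1)"
      by (rule htg_adj_sym, rule htg_adj_vertical; use assms in simp)+
  qed simp
  then show ?thesis by fastforce
qed

lemma htg_six_cycle_m1:
  assumes "even n" and "odd L" and "3 \<le> L" and "L + 3 \<le> n"
  shows "\<exists>c. is_cycle (htg_verts 1 n) (htg_adj 1 n (int L)) c \<and> length c = 6"
proof -
  have "is_cycle (htg_verts 1 n) (htg_adj 1 n (int L))
      [(0, 1), (0, L + 1), (0, L), (0, L - 1), (0, n - 1), (0, 0)]"
  proof (rule is_cycle_6I[OF _ _ _ _ _ _ _ htg_adj_in_verts])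
    show "htg_adj 1 n (int L) (0, 1) (0, L + 1)" by (rule htg_adj_jump) (use assms in auto)
    show "htg_adj 1 n (int L) (0, L + 1) (0, L)" "htg_adj 1 n (int L) (0, L) (0, L - 1)"
      by (rule htg_adj_sym, rule htg_adj_vertical; use assms in simp)+
    have last_row: "(n - 1) mod 2 = 1" using assms(1,4) by presburger
    have "int (n - 1) + int L - int (L - 1) = int n" using assms(3,4) by linarith
    then have shift: "[int (n - 1) + int L = int (L - 1)] (mod int n)"
      unfolding cong_iff_dvd_diff by simp
    show "htg_adj 1 n (int L) (0, L - 1) (0, n - 1)"
      by (rule htg_adj_sym, rule htg_adj_jump) (use assms last_row shift in auto)
    show "htg_adj 1 n (int L) (0, n - 1) (0, 0)" using htg_adj_vertical_wrap assms by simp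
    show "htg_adj 1 n (int L) (0, 0) (0, 1)" by (rule htg_adj_vertical) (use assms in auto)
  qed (use assms in auto)
  then show ?thesis by fastforce
qed

section \<open>Four-cycles\<close>

lemma vertical_steps_no_backtrack:
  assumes "fst y = fst x" "[int (snd x) + e = int (snd y)] (mod int n)"
    and "fst z = fst y" "[int (snd y) + e' = int (snd z)] (mod int n)"
    and "snd x < n" "snd z < n" "x \<noteq> z"
  shows "e + e' \<noteq> 0"
proof
  assume "e + e' = 0"
  then have "[int (snd x) + 0 = int (snd z)] (mod int n)"
    using cong_shift_trans[OF assms(2,4)] by simp
  then have "snd x = snd z"
    using cong_less_imp_eq_int[of "int (snd x)" "int n" "int (snd z)"] assms(5,6) by simp
  then show False using assms(1,3,7) by (simp add: prod_eq_iff)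
qed

lemma vertical_four_cycle_dvd:
  assumes "vertical_adj n a b" "vertical_adj n b c" "vertical_adj n c d" "vertical_adj n d a"
    and "snd a < n" "snd b < n" "snd c < n" "snd d < n" and "a \<noteq> c" "b \<noteq> d"
  shows "int n dvd 4"
proof -
  obtain d1 where d1: "\<bar>d1\<bar> = 1" "fst b = fst a" "[int (snd a) + d1 = int (snd b)] (mod int n)"
    using assms(1) by (rule vertical_adjE)
  obtain d2 where d2: "\<bar>d2\<bar> = 1" "fst c = fst b" "[int (snd b) + d2 = int (snd c)] (mod int n)"
    using assms(2) by (rule vertical_adjE)
  obtain d3 where d3: "\<bar>d3\<bar> = 1" "fst d = fst c" "[int (snd c) + d3 = int (snd d)] (mod int n)"
    using assms(3) by (rule vertical_adjE)
  obtain d4 where d4: "\<bar>d4\<bar> = 1" "fst a = fst d" "[int (snd d) + d4 = int (snd a)] (mod int n)"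
    using assms(4) by (rule vertical_adjE)
  have "d1 + d2 \<noteq> 0" "d2 + d3 \<noteq> 0" "d3 + d4 \<noteq> 0" "d4 + d1 \<noteq> 0"
    using vertical_steps_no_backtrack d1(2,3) d2(2,3) d3(2,3) d4(2,3) assms(5-10) by metis+
  then have "d1 + d2 + d3 + d4 = 4 \<or> d1 + d2 + d3 + d4 = - 4"
    using d1(1) d2(1) d3(1) d4(1) by arith
  moreover have "[int (snd a) + (d1 + d2 + d3 + d4) = int (snd a)] (mod int n)"
    using cong_shift_trans[OF cong_shift_trans[OF cong_shift_trans[OF d1(3) d2(3)] d3(3)] d4(3)]
    by (simp add: add.assoc)
  ultimately show ?thesis unfolding cong_shift_self_iff by auto
qed

definition htg_exceptional :: "nat \<Rightarrow> nat \<Rightarrow> int \<Rightarrow> bool" where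
  "htg_exceptional m n l \<longleftrightarrow>
     n = 4
     \<or> (m = 1 \<and> n > 4 \<and> l = 3)
     \<or> (m = 1 \<and> n > 4 \<and> n mod 4 = 2 \<and> 2 * l = int n)
     \<or> (m = 1 \<and> n > 4 \<and> n mod 4 = 0 \<and> 2 * l = int n - 2)
     \<or> (m = 2 \<and> n > 4 \<and> (l = 0 \<or> l = 2))"

text \<open>In normal form a jump edge duplicates a vertical edge only for m = 1 and l = 1. That
  graph is not simple, and excluding it is the only use of simplicity.\<close>

locale htg_normal_form = htg +
  assumes n_ge_4: "4 \<le> n" and l_nonneg: "0 \<le> l" and l_le_half: "2 * l \<le> int n"
    and jump_not_vertical: "m = 1 \<Longrightarrow> l \<noteq> 1"
begin

lemma exceptional_if_dvd_l_plus_odd: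
  assumes "m = 1" and "int n dvd (l + s)" and "s = -3 \<or> s = -1 \<or> s = 1 \<or> s = 3"
  shows "htg_exceptional m n l"
proof -
  have "l + s = 0 \<or> l + s = int n"
    by (rule dvd_cases_between_neg_double[OF assms(2)])
      (use assms(3) l_nonneg l_le_half n_ge_4 in auto)
  then have "l = 3 \<or> n = 4"
  proof
    assume "l + s = 0"
    then show ?thesis using assms(1,3) jump_not_vertical l_nonneg by auto
  next
    assume "l + s = int n"
    then have "n \<le> 6" using assms(3) l_le_half by linarith
    then have "n = 4 \<or> n = 6" using n_even n_ge_4 by presburger
    then show ?thesis using \<open>l + s = int n\<close> assms(3) l_le_half by auto
  qed
  then show ?thesis unfolding htg_exceptional_def using assms(1) n_ge_4 by auto
qed

lemma one_horizontal_four_cycle: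
  assumes "horizontal_adj m n l x y"
    and "vertical_adj n y u" "vertical_adj n u v" "vertical_adj n v x"
  shows "htg_exceptional m n l"
proof -
  obtain d1 where d1: "\<bar>d1\<bar> = 1" "fst u = fst y" "[int (snd y) + d1 = int (snd u)] (mod int n)"
    using assms(2) by (rule vertical_adjE)
  obtain d2 where d2: "\<bar>d2\<bar> = 1" "fst v = fst u" "[int (snd u) + d2 = int (snd v)] (mod int n)"
    using assms(3) by (rule vertical_adjE)
  obtain d3 where d3: "\<bar>d3\<bar> = 1" "fst x = fst v" "[int (snd v) + d3 = int (snd x)] (mod int n)"
    using assms(4) by (rule vertical_adjE)
  define t where "t = d1 + d2 + d3"
  have walk: "[int (snd y) + t = int (snd x)] (mod int n)"
    unfolding t_def using cong_shift_trans[OF cong_shift_trans[OF d1(3) d2(3)] d3(3)]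
    by (simp add: add.assoc)
  have "fst x = fst y" using d1(2) d2(2) d3(2) by simp
  then have m1: "m = 1" and jump: "[int (snd x) + l = int (snd y)] (mod int n) \<or>
      [int (snd y) + l = int (snd x)] (mod int n)"
    using horizontal_adj_same_column[OF assms(1)] by auto
  have "int n dvd (l + t) \<or> int n dvd (l + - t)"
  proof (rule disjE[OF jump])
    assume "[int (snd x) + l = int (snd y)] (mod int n)"
    from cong_shift_trans[OF this walk] show ?thesis by (simp add: cong_shift_self_iff)
  next
    assume "[int (snd y) + l = int (snd x)] (mod int n)"
    from cong_shift_trans[OF cong_shift_sym[OF walk] this] have "int n dvd (- t + l)"
      by (simp only: cong_shift_self_iff)
    then show ?thesis by (simp add: add.commute)
  qed
  moreover have "t = -3 \<or> t = -1 \<or> t = 1 \<or> t = 3"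
    unfolding t_def using d1(1) d2(1) d3(1) by arith
  ultimately show ?thesis
    using exceptional_if_dvd_l_plus_odd m1 by (metis add.inverse_inverse neg_equal_iff_equal)
qed

lemma flat_jump_crossed:
  assumes "flat_edge m x y" and "jump_edge m n l x' y'"
    and "vertical_adj n y x'" and "vertical_adj n y' x"
  shows "htg_exceptional m n l"
proof -
  obtain d1 where d1: "\<bar>d1\<bar> = 1" "fst x' = fst y" "[int (snd y) + d1 = int (snd x')] (mod int n)"
    using assms(3) by (rule vertical_adjE)
  obtain d2 where d2: "\<bar>d2\<bar> = 1" "fst x = fst y'" "[int (snd y') + d2 = int (snd x)] (mod int n)"
    using assms(4) by (rule vertical_adjE)
  have flat: "fst y = fst x + 1" "snd y = snd x" using assms(1) unfolding flat_edge_def by auto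
  have jump: "fst x' = m - 1" "fst y' = 0" "[int (snd x') + l = int (snd y')] (mod int n)"
    using assms(2) unfolding jump_edge_def by auto
  have m2: "m = 2" using flat(1) jump(1,2) d1(2) d2(2) by simp
  have "[int (snd x) + (d1 + l + d2) = int (snd x)] (mod int n)"
    using cong_shift_trans[OF cong_shift_trans[OF d1(3) jump(3)] d2(3)] flat(2) by simp
  then have "int n dvd (d1 + l + d2)" by (simp only: cong_shift_self_iff)
  then have dvd: "int n dvd (l + (d1 + d2))" by (simp add: ac_simps)
  have s: "d1 + d2 = -2 \<or> d1 + d2 = 0 \<or> d1 + d2 = 2" using d1(1) d2(1) by arith
  have "l + (d1 + d2) = 0 \<or> l + (d1 + d2) = int n"
    by (rule dvd_cases_between_neg_double[OF dvd]) (use s l_nonneg l_le_half n_ge_4 in auto)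
  then have "l = 0 \<or> l = 2 \<or> n = 4" using s l_nonneg l_le_half n_ge_4 by auto
  then show ?thesis unfolding htg_exceptional_def using m2 n_ge_4 by auto
qed

lemma jump_jump_crossed:
  assumes "jump_edge m n l x y" and "jump_edge m n l x' y'"
    and "vertical_adj n y x'" and "vertical_adj n y' x"
  shows "htg_exceptional m n l"
proof -
  obtain d1 where d1: "\<bar>d1\<bar> = 1" "fst x' = fst y" "[int (snd y) + d1 = int (snd x')] (mod int n)"
    using assms(3) by (rule vertical_adjE)
  obtain d2 where d2: "\<bar>d2\<bar> = 1" "fst x = fst y'" "[int (snd y') + d2 = int (snd x)] (mod int n)"
    using assms(4) by (rule vertical_adjE)
  have jump: "fst y = 0" "fst x' = m - 1" "[int (snd x) + l = int (snd y)] (mod int n)"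
    "[int (snd x') + l = int (snd y')] (mod int n)"
    using assms(1,2) unfolding jump_edge_def by auto
  have m1: "m = 1" using jump(1,2) d1(2) m_pos by simp
  have "[int (snd x) + (l + d1 + l + d2) = int (snd x)] (mod int n)"
    using cong_shift_trans[OF cong_shift_trans[OF cong_shift_trans[OF jump(3) d1(3)] jump(4)] d2(3)]
    by (simp add: add.assoc)
  then have "int n dvd (l + d1 + l + d2)" by (simp only: cong_shift_self_iff)
  then have dvd: "int n dvd (2 * l + (d1 + d2))" by (simp add: algebra_simps)
  have s: "d1 + d2 = -2 \<or> d1 + d2 = 0 \<or> d1 + d2 = 2" using d1(1) d2(1) by arith
  have "odd l" using l_parity m1 by presburger
  have "2 * l + (d1 + d2) = 0 \<or> 2 * l + (d1 + d2) = int n"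
    by (rule dvd_cases_between_neg_double[OF dvd]) (use s l_nonneg l_le_half n_ge_4 in auto)
  then have "2 * l = int n \<or> 2 * l = int n - 2"
    using s \<open>odd l\<close> jump_not_vertical[OF m1] l_nonneg l_le_half by auto
  then have "n = 4 \<or> (n mod 4 = 2 \<and> 2 * l = int n) \<or> (n mod 4 = 0 \<and> 2 * l = int n - 2)"
    using \<open>odd l\<close> by presburger
  then show ?thesis unfolding htg_exceptional_def using m1 n_ge_4 by auto
qed

text \<open>Oriented from odd to even, the two horizontal edges of a 4-cycle are traversed in
  opposite directions, so their endpoints are joined crosswise by the vertical edges.\<close>

lemma crossed_horizontal_edges:
  assumes "horizontal_edge m n l x y" and "horizontal_edge m n l x' y'"
    and "vertical_adj n y x'" and "vertical_adj n y' x"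
  shows "htg_exceptional m n l"
proof -
  have "\<not> (flat_edge m x y \<and> flat_edge m x' y')"
    using assms(3,4) unfolding flat_edge_def vertical_adj_def by (auto simp: prod_eq_iff)
  then show ?thesis
    using assms flat_jump_crossed jump_jump_crossed flat_jump_crossed[of x' y' x y]
    unfolding horizontal_edge_def by blast
qed

lemma two_horizontal_four_cycle:
  assumes "horizontal_adj m n l a b" "vertical_adj n b c"
    and "horizontal_adj m n l c d" "vertical_adj n d a"
  shows "htg_exceptional m n l"
proof (cases "horizontal_edge m n l a b")
  case True
  then have "odd (fst c + snd c)"
    using horizontal_edge_parity vertical_adj_parity[OF n_even assms(2)] by auto
  then have "horizontal_edge m n l c d"
    using assms(3) horizontal_edge_parity unfolding horizontal_adj_def by blast
  then show ?thesis using crossed_horizontal_edges True assms(2,4) by blast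
next
  case False
  then have ba: "horizontal_edge m n l b a" using assms(1) unfolding horizontal_adj_def by blast
  then have "odd (fst d + snd d)"
    using horizontal_edge_parity vertical_adj_parity[OF n_even assms(4)] by auto
  then have "horizontal_edge m n l d c"
    using assms(3) horizontal_edge_parity unfolding horizontal_adj_def by blast
  then show ?thesis
    using crossed_horizontal_edges ba vertical_adj_sym[OF assms(2)] vertical_adj_sym[OF assms(4)]
    by blast
qed

lemma four_cycle_exceptional:
  assumes "htg_adj m n l a b" "htg_adj m n l b c" "htg_adj m n l c d" "htg_adj m n l d a"
    and "a \<noteq> c" and "b \<noteq> d"
  shows "htg_exceptional m n l"
proof -
  note ab = htg_adj_cases[OF assms(1)] and bc = htg_adj_cases[OF assms(2)]
    and cd = htg_adj_cases[OF assms(3)] and da = htg_adj_cases[OF assms(4)]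
  have no_consecutive:
    "\<not> (horizontal_adj m n l a b \<and> horizontal_adj m n l b c)"
    "\<not> (horizontal_adj m n l b c \<and> horizontal_adj m n l c d)"
    "\<not> (horizontal_adj m n l c d \<and> horizontal_adj m n l d a)"
    "\<not> (horizontal_adj m n l d a \<and> horizontal_adj m n l a b)"
    using horizontal_adj_unique horizontal_adj_sym ab(2,3) bc(2,3) cd(2,3) da(2,3) assms(5,6)
    by metis+
  have all_vertical: "htg_exceptional m n l"
    if "vertical_adj n a b" "vertical_adj n b c" "vertical_adj n c d" "vertical_adj n d a"
  proof -
    have "int n dvd 4"
      using vertical_four_cycle_dvd[OF that ab(2) bc(2) cd(2) da(2) assms(5,6)] .
    then have "int n \<le> 4" by (rule zdvd_imp_le) simp
    then have "n = 4" using n_ge_4 by simp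
    then show ?thesis unfolding htg_exceptional_def by simp
  qed
  show ?thesis
    using ab(1) bc(1) cd(1) da(1) no_consecutive all_vertical
      one_horizontal_four_cycle[of a b c d] one_horizontal_four_cycle[of b c d a]
      one_horizontal_four_cycle[of c d a b] one_horizontal_four_cycle[of d a b c]
      two_horizontal_four_cycle[of a b c d] two_horizontal_four_cycle[of b c d a]
    by blast
qed

lemma htg_cycle_length_lower_bound:
  assumes "is_cycle (htg_verts m n) (htg_adj m n l) c"
  shows "(if htg_exceptional m n l then 4 else 6) \<le> length c"
proof -
  have "even (length c)"
    using is_cycle_even_length[OF assms, of "\<lambda>v. even (fst v + snd v)"] htg_adj_parity by blast
  moreover have "3 \<le> length c" using assms unfolding is_cycle_def by simp
  moreover have "htg_exceptional m n l" if "length c = 4"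
    using is_cycle_length_4E[OF assms that] four_cycle_exceptional by metis
  ultimately show ?thesis by (cases "htg_exceptional m n l"; cases "length c = 4") presburger+
qed

lemma exceptional_four_cycle:
  assumes "htg_exceptional m n l"
  shows "\<exists>c. is_cycle (htg_verts m n) (htg_adj m n l) c \<and> length c = 4"
proof -
  obtain L where L: "l = int L" using l_nonneg nonneg_int_cases by blast
  have "n = 4 \<or> (m = 1 \<and> 6 \<le> n \<and> l = 3) \<or> (m = 1 \<and> (n = 2 * L \<or> n = 2 * L + 2))
      \<or> (m = 2 \<and> (l = 0 \<or> l = 2))"
    using assms n_even unfolding htg_exceptional_def L by presburger
  then consider "n = 4" | "m = 1" "6 \<le> n" "l = 3" | "m = 1" "n = 2 * L \<or> n = 2 * L + 2"
    | "m = 2" "l = 0 \<or> l = 2"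
    by blast
  then show ?thesis
  proof cases
    case 1
    then show ?thesis using htg_four_cycle_n4 m_pos by simp
  next
    case 2
    then show ?thesis using htg_four_cycle_m1_l3 by simp
  next
    case 3
    have "odd L" using l_parity 3 L by presburger
    moreover have "L \<noteq> 1" using jump_not_vertical 3 L by simp
    ultimately have "3 \<le> L" by presburger
    then show ?thesis using htg_four_cycle_m1_double_jump \<open>odd L\<close> 3 L by simp
  next
    case 4
    then show ?thesis using htg_four_cycle_m2 n_ge_4 by simp
  qed
qed

lemma six_cycle: "\<exists>c. is_cycle (htg_verts m n) (htg_adj m n l) c \<and> length c = 6"
proof (cases "2 \<le> m")
  case True
  then show ?thesis using htg_six_cycle_m2 n_ge_4 by blast
next
  case False
  then have m1: "m = 1" using m_pos by simp
  obtain L where L: "l = int L" using l_nonneg nonneg_int_cases by blast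
  have "odd L" using l_parity m1 L by presburger
  moreover have "L \<noteq> 1" using jump_not_vertical m1 L by simp
  ultimately have "3 \<le> L" by presburger
  moreover have "L + 3 \<le> n" using l_le_half L \<open>3 \<le> L\<close> by linarith
  ultimately show ?thesis using htg_six_cycle_m1 n_even \<open>odd L\<close> m1 L by simp
qed

theorem htg_girth:
  "girth (htg_verts m n) (htg_adj m n l) = (if htg_exceptional m n l then 4 else 6)"
proof -
  obtain c where "is_cycle (htg_verts m n) (htg_adj m n l) c"
    and "length c = (if htg_exceptional m n l then 4 else 6)"
    using exceptional_four_cycle six_cycle by (cases "htg_exceptional m n l") auto
  then show ?thesis by (rule girth_eqI) (rule htg_cycle_length_lower_bound)
qed

end

lemma htg_simple_cubic_not_1_1:
  assumes "3 \<le> n"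
  shows "\<not> htg_simple_cubic 1 n 1"
proof
  assume cubic: "htg_simple_cubic 1 n 1"
  have neighbours: "{w. htg_adj 1 n 1 (0, 1) w} \<subseteq> {(0, 0), (0, 2)}"
  proof
    fix w
    assume "w \<in> {w. htg_adj 1 n 1 (0, 1) w}"
    then have adj: "htg_adj 1 n 1 (0, 1) w" by simp
    then have "fst w = 0" and w: "snd w < n" unfolding htg_adj_iff htg_verts_def by auto
    have "[int 1 + 1 = int (snd w)] (mod int n) \<or> [int (snd w) + 1 = int 1] (mod int n)"
      using adj unfolding htg_adj_iff vertical_adj_iff horizontal_adj_def horizontal_edge_def
        flat_edge_def jump_edge_def by auto
    then have "snd w = 2 \<or> snd w = 0"
      using cong_shift_unique[where j = 1 and k = 1 and j' = "snd w" and j'' = 2 and n = n]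
        cong_shift_unique_source[where j' = "snd w" and k = 1 and j = 1 and j'' = 0 and n = n]
        w assms
      by auto
    then show "w \<in> {(0, 0), (0, 2)}" using \<open>fst w = 0\<close> by (auto simp: prod_eq_iff)
  qed
  have "(0, 1) \<in> htg_verts 1 n" using assms unfolding htg_verts_def by simp
  then have "card {w. htg_adj 1 n 1 (0, 1) w} = 3"
    using cubic unfolding htg_simple_cubic_def by blast
  moreover have "card {w. htg_adj 1 n 1 (0, 1) w} \<le> card {(0::nat, 0::nat), (0, 2)}"
    by (rule card_mono[OF _ neighbours]) simp
  ultimately show False by simp
qed

theorem theorem5p1:
  fixes m n :: nat and l :: int
  assumes "m \<ge> 1" and "n \<ge> 4" and "even n"
    and "l mod 2 = int m mod 2"
    and "htg_simple_cubic m n l"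
    and "0 \<le> l" and "2 * l \<le> int n"
  shows "girth (htg_verts m n) (htg_adj m n l) =
    (if n = 4
        \<or> (m = 1 \<and> n > 4 \<and> l = 3)
        \<or> (m = 1 \<and> n > 4 \<and> n mod 4 = 2 \<and> 2 * l = int n)
        \<or> (m = 1 \<and> n > 4 \<and> n mod 4 = 0 \<and> 2 * l = int n - 2)
        \<or> (m = 2 \<and> n > 4 \<and> (l = 0 \<or> l = 2))
     then 4 else 6)"
proof -
  have "l \<noteq> 1" if "m = 1"
    using htg_simple_cubic_not_1_1[of n] assms(2,5) that by auto
  then interpret htg_normal_form m n l
    by unfold_locales (use assms in auto)
  show ?thesis using htg_girth unfolding htg_exceptional_def .
qed

end
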